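(* The logic $\mathsf{Box}=\mathsf{wPL}\oplus\mathsf{bw}_2\oplus(\neg p\vee\neg\neg p)$ equals $\mathrm{Log}(\{S_n:n\in\omega, n\ge 2\})$.
   Context: $\mathsf{wPL}=\mathsf{IPC}\oplus(q\to p)\vee(((p\to q)\to p)\to p)$. $\mathsf{bw}_2=\bigvee_{i=0}^{2}\big(p_i\to\bigvee_{j\ne i}p_j\big)$ is the bounded width 2 axiom (its rooted frames have no 3-element antichains). For $n\ge2$, $S_n$ is the finite poset consisting of a bottom point $\rho$, then $n-1$ layers $L_{n-2},\dots,L_0$ (from bottom to top) each consisting of two incomparable points, and a top point $\tau$; the order is: $\rho$ below everything, every point of $L_{j+1}$ below every point of $L_j$, and every point below $\tau$. ($S_n$ is the underlying frame of the model $N^{n-2}_n$ with a maximal point added.) $\mathrm{Log}(\mathbf K)$ is the set of formulas valid on all posets of $\mathbf K$. *)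

theory Defs
  imports Main
begin

datatype form = Var nat | Bot | And form form | Or form form | Imp form form

definition Neg :: "form \<Rightarrow> form" where "Neg A = Imp A Bot"

fun subst :: "(nat \<Rightarrow> form) \<Rightarrow> form \<Rightarrow> form" where
  "subst s (Var n) = s n"
| "subst s Bot = Bot"
| "subst s (And A B) = And (subst s A) (subst s B)"
| "subst s (Or A B) = Or (subst s A) (subst s B)"
| "subst s (Imp A B) = Imp (subst s A) (subst s B)"

inductive ipc_axiom :: "form \<Rightarrow> bool" where
  "ipc_axiom (Imp A (Imp B A))"
| "ipc_axiom (Imp (Imp A (Imp B C)) (Imp (Imp A B) (Imp A C)))"
| "ipc_axiom (Imp (And A B) A)"
| "ipc_axiom (Imp (And A B) B)"
| "ipc_axiom (Imp A (Imp B (And A B)))"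
| "ipc_axiom (Imp A (Or A B))"
| "ipc_axiom (Imp B (Or A B))"
| "ipc_axiom (Imp (Imp A C) (Imp (Imp B C) (Imp (Or A B) C)))"
| "ipc_axiom (Imp Bot A)"

inductive in_ext :: "form set \<Rightarrow> form \<Rightarrow> bool" for G :: "form set" where
  ax: "ipc_axiom A \<Longrightarrow> in_ext G A"
| hyp: "A \<in> G \<Longrightarrow> in_ext G (subst s A)"
| mp: "in_ext G (Imp A B) \<Longrightarrow> in_ext G A \<Longrightarrow> in_ext G B"

definition ext_logic :: "form set \<Rightarrow> form set" where
  "ext_logic G = {A. in_ext G A}"

definition wPL_ax :: form where
  "wPL_ax = Or (Imp (Var 1) (Var 0)) (Imp (Imp (Imp (Var 0) (Var 1)) (Var 0)) (Var 0))"

definition bw2_ax :: form where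
  "bw2_ax = Or (Imp (Var 0) (Or (Var 1) (Var 2)))
              (Or (Imp (Var 1) (Or (Var 0) (Var 2)))
                  (Imp (Var 2) (Or (Var 0) (Var 1))))"

definition wem_ax :: form where
  "wem_ax = Or (Neg (Var 0)) (Neg (Neg (Var 0)))"

definition Box_logic :: "form set" where
  "Box_logic = ext_logic {wPL_ax, bw2_ax, wem_ax}"

fun forces :: "'a set \<Rightarrow> ('a \<Rightarrow> 'a \<Rightarrow> bool) \<Rightarrow> (nat \<Rightarrow> 'a set) \<Rightarrow> 'a \<Rightarrow> form \<Rightarrow> bool" where
  "forces W R V w (Var n) = (w \<in> V n)"
| "forces W R V w Bot = False"
| "forces W R V w (And A B) = (forces W R V w A \<and> forces W R V w B)"
| "forces W R V w (Or A B) = (forces W R V w A \<or> forces W R V w B)"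
| "forces W R V w (Imp A B) =
     (\<forall>v\<in>W. R w v \<longrightarrow> forces W R V v A \<longrightarrow> forces W R V v B)"

definition upset :: "'a set \<Rightarrow> ('a \<Rightarrow> 'a \<Rightarrow> bool) \<Rightarrow> 'a set \<Rightarrow> bool" where
  "upset W R U \<longleftrightarrow> U \<subseteq> W \<and> (\<forall>u\<in>U. \<forall>v\<in>W. R u v \<longrightarrow> v \<in> U)"

definition valid_on :: "'a set \<Rightarrow> ('a \<Rightarrow> 'a \<Rightarrow> bool) \<Rightarrow> form \<Rightarrow> bool" where
  "valid_on W R A \<longleftrightarrow>
     (\<forall>V. (\<forall>n. upset W R (V n)) \<longrightarrow> (\<forall>w\<in>W. forces W R V w A))"

text \<open>Points: bottom rho, layer points Lay j b (layer L_j, j = 0..n-2, two points each),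
  top tau.  L_{j+1} lies below L_j.\<close>
datatype spt = Rho | Lay nat bool | Tau

definition S_carrier :: "nat \<Rightarrow> spt set" where
  "S_carrier n = {Rho, Tau} \<union> {Lay j b | j b. j < n - 1}"

fun S_le :: "spt \<Rightarrow> spt \<Rightarrow> bool" where
  "S_le Rho _ = True"
| "S_le _ Tau = True"
| "S_le (Lay j a) (Lay i b) = ((j = i \<and> a = b) \<or> i < j)"
| "S_le _ _ = False"

definition Log_S :: "form set" where
  "Log_S = {A. \<forall>n\<ge>2. valid_on (S_carrier n) S_le A}"

end

theory Submission
  imports Defs
begin

(* Soundness: S_n has a top element and no three pairwise incomparable points, and if u' is a
   proper successor of u then every point lies above u or is comparable with u'.  These frame
   conditions validate wem, bw2 and wPL.

   Completeness: if A is not in Box, take a prime theory w0 that is maximal among those omitting A.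
   Call a pair of prime theories above w0 a layer if they are equal or incomparable and each is
   maximal among the prime theories omitting some formula.  For every implication B --> C among the
   subformulas of A that is refuted at a point of a layer, choose a prime theory containing B but
   not C.  By wPL each of these witnesses lies above both points of the layer, and by bw2 their
   minimal elements form a new layer, which misses fewer subformulas of A; so the
   process stops.  When no witness is needed, wem makes the union of the last layer consistent,
   and a maximal consistent extension of it is the image of the top.  The resulting map
   from some S_n to prime theories, with root w0, satisfies a truth lemma for the subformulas of A,
   so A fails on S_n. *)

fun subformulas :: "form \<Rightarrow> form set" where
  "subformulas (Var n) = {Var n}"
| "subformulas Bot = {Bot}"
| "subformulas (And A B) = insert (And A B) (subformulas A \<union> subformulas B)"
| "subformulas (Or A B) = insert (Or A B) (subformulas A \<union> subformulas B)"
| "subformulas (Imp A B) = insert (Imp A B) (subformulas A \<union> subformulas B)"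

lemma finite_subformulas: "finite (subformulas A)"
  by (induction A) auto

lemma subformulas_refl: "A \<in> subformulas A"
  by (cases A) auto

lemma subformulas_Imp: "Imp B C \<in> subformulas A \<Longrightarrow> B \<in> subformulas A \<and> C \<in> subformulas A"
  by (induction A) (auto simp: subformulas_refl)

lemma forces_persistent:
  assumes "transp_on W R" and "\<forall>n. upset W R (V n)"
  shows "w \<in> W \<Longrightarrow> v \<in> W \<Longrightarrow> R w v \<Longrightarrow> forces W R V w A \<Longrightarrow> forces W R V v A"
proof (induction A arbitrary: w v)
  case (Var n)
  then show ?case using assms(2) by (auto simp: upset_def)
next
  case (Imp A B)
  then show ?case using assms(1) by (auto dest: transp_onD)
qed auto

lemma forces_subst:
  "w \<in> W \<Longrightarrow> forces W R V w (subst s A) = forces W R (\<lambda>n. {v\<in>W. forces W R V v (s n)}) w A"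
  by (induction A arbitrary: w) auto

lemma valid_on_subst:
  assumes "transp_on W R" and "valid_on W R A"
  shows "valid_on W R (subst s A)"
  unfolding valid_on_def
proof (intro allI impI ballI)
  fix V :: "nat \<Rightarrow> 'a set" and w assume up: "\<forall>n. upset W R (V n)" and w: "w \<in> W"
  let ?V' = "\<lambda>n. {v\<in>W. forces W R V v (s n)}"
  have "\<forall>n. upset W R (?V' n)"
    using forces_persistent[OF assms(1) up] by (auto simp: upset_def)
  then have "forces W R ?V' w A"
    using assms(2) w by (auto simp: valid_on_def)
  then show "forces W R V w (subst s A)" by (simp add: forces_subst[OF w])
qed

lemma ipc_axiom_valid:
  assumes "reflp_on W R" and "transp_on W R" and "ipc_axiom A"
  shows "valid_on W R A"
  unfolding valid_on_def
proof (intro allI impI ballI)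
  fix V :: "nat \<Rightarrow> 'a set" and w assume up: "\<forall>n. upset W R (V n)" and "w \<in> W"
  note persistent = forces_persistent[OF assms(2) up]
  note refl = reflp_onD[OF assms(1)] and trans = transp_onD[OF assms(2)]
  from assms(3) show "forces W R V w A"
  proof cases
    case (2 A B C)
    then show ?thesis by simp (meson refl trans)
  next
    case (8 A C B)
    then show ?thesis by simp (meson trans)
  qed (auto intro: persistent)
qed

lemma valid_on_mp:
  assumes "reflp_on W R" and "valid_on W R (Imp A B)" and "valid_on W R A"
  shows "valid_on W R B"
  using assms by (auto simp: valid_on_def reflp_on_def)

lemma in_ext_valid:
  assumes "reflp_on W R" and "transp_on W R" and "\<forall>B\<in>G. valid_on W R B" and "in_ext G A"
  shows "valid_on W R A"
  using assms(4)
  by induction (use assms in \<open>auto intro: ipc_axiom_valid valid_on_subst valid_on_mp\<close>)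

lemma wPL_valid:
  assumes "reflp_on W R" and "transp_on W R"
    and fork: "\<And>u u' v. u \<in> W \<Longrightarrow> u' \<in> W \<Longrightarrow> v \<in> W \<Longrightarrow> R u u' \<Longrightarrow> u \<noteq> u' \<Longrightarrow>
                  R u v \<or> R u' v \<or> R v u'"
  shows "valid_on W R wPL_ax"
  unfolding valid_on_def wPL_ax_def
proof (intro allI impI ballI)
  fix V :: "nat \<Rightarrow> 'a set" and w assume up: "\<forall>n. upset W R (V n)" and "w \<in> W"
  note refl = reflp_onD[OF assms(1)]
  have up0: "R x y \<Longrightarrow> x \<in> V k \<Longrightarrow> y \<in> W \<Longrightarrow> y \<in> V k" for x y k
    using up by (auto simp: upset_def)
  show "forces W R V w (Or (Imp (Var 1) (Var 0)) (Imp (Imp (Imp (Var 0) (Var 1)) (Var 0)) (Var 0)))"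
  proof (rule ccontr)
    assume "\<not> ?thesis"
    then obtain v u where v: "v \<in> W" "v \<in> V 1" "v \<notin> V 0"
      and u: "u \<in> W" "forces W R V u (Imp (Imp (Var 0) (Var 1)) (Var 0))" "u \<notin> V 0"
      by auto
    then obtain u' where u': "u' \<in> W" "R u u'" "u' \<in> V 0" "u' \<notin> V 1"
      using refl by auto
    have "u \<noteq> u'" using u u' by auto
    with fork consider "R u v" | "R u' v" | "R v u'" using u u' v by blast
    then show False
    proof cases
      case 1
      then have "forces W R V v (Imp (Imp (Var 0) (Var 1)) (Var 0))"
        using forces_persistent[OF assms(2) up] u v by blast
      moreover have "forces W R V v (Imp (Var 0) (Var 1))"
        using v up0 by auto
      ultimately show False using v refl by auto
    qed (use u' v up0 in auto)
  qed
qed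

lemma bw2_valid:
  assumes width: "\<And>x y z. x \<in> W \<Longrightarrow> y \<in> W \<Longrightarrow> z \<in> W \<Longrightarrow>
                    R x y \<or> R y x \<or> R x z \<or> R z x \<or> R y z \<or> R z y"
  shows "valid_on W R bw2_ax"
  unfolding valid_on_def bw2_ax_def
proof (intro allI impI ballI)
  fix V :: "nat \<Rightarrow> 'a set" and w assume up: "\<forall>n. upset W R (V n)" and "w \<in> W"
  have sep: "x \<in> V k \<Longrightarrow> y \<in> W \<Longrightarrow> y \<notin> V k \<Longrightarrow> \<not> R x y" for x y k
    using up by (auto simp: upset_def)
  show "forces W R V w (Or (Imp (Var 0) (Or (Var 1) (Var 2)))
          (Or (Imp (Var 1) (Or (Var 0) (Var 2))) (Imp (Var 2) (Or (Var 0) (Var 1)))))"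
  proof (rule ccontr)
    assume "\<not> ?thesis"
    then obtain x y z where "x \<in> W" "y \<in> W" "z \<in> W"
      "x \<in> V 0" "x \<notin> V 1" "x \<notin> V 2" "y \<in> V 1" "y \<notin> V 0" "y \<notin> V 2"
      "z \<in> V 2" "z \<notin> V 0" "z \<notin> V 1"
      by auto
    then show False using width[of x y z] sep by metis
  qed
qed

lemma wem_valid:
  assumes "\<tau> \<in> W" and "\<forall>v\<in>W. R v \<tau>"
  shows "valid_on W R wem_ax"
  unfolding valid_on_def wem_ax_def Neg_def
proof (intro allI impI ballI)
  fix V :: "nat \<Rightarrow> 'a set" and w assume up: "\<forall>n. upset W R (V n)" and "w \<in> W"
  show "forces W R V w (Or (Imp (Var 0) Bot) (Imp (Imp (Var 0) Bot) Bot))"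
  proof (cases "\<tau> \<in> V 0")
    case True
    then show ?thesis using assms by auto
  next
    case False
    then have "v \<notin> V 0" if "v \<in> W" for v
      using up assms that by (auto simp: upset_def)
    then show ?thesis by auto
  qed
qed

section \<open>Soundness on the posets S_n\<close>

lemma reflp_S_le: "reflp S_le"
  by (rule reflpI) (case_tac x; simp)

lemma transp_S_le: "transp S_le"
  by (rule transpI) (case_tac x; case_tac y; case_tac z; auto)

lemma S_le_fork: "S_le u u' \<Longrightarrow> u \<noteq> u' \<Longrightarrow> S_le u v \<or> S_le u' v \<or> S_le v u'"
  by (cases u; cases u'; cases v) auto

lemma S_le_width: "S_le x y \<or> S_le y x \<or> S_le x z \<or> S_le z x \<or> S_le y z \<or> S_le z y"
  by (cases x; cases y; cases z) auto

lemma S_le_Tau: "S_le x Tau"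
  by (cases x) auto

lemma Tau_in_S_carrier: "Tau \<in> S_carrier n"
  by (simp add: S_carrier_def)

lemma S_carrier_valid_Box_logic:
  assumes "A \<in> Box_logic"
  shows "valid_on (S_carrier n) S_le A"
proof -
  have refl: "reflp_on (S_carrier n) S_le" and trans: "transp_on (S_carrier n) S_le"
    using reflp_S_le transp_S_le by (auto intro: reflp_on_subset transp_on_subset)
  have "valid_on (S_carrier n) S_le wPL_ax"
    by (rule wPL_valid[OF refl trans]) (rule S_le_fork)
  moreover have "valid_on (S_carrier n) S_le bw2_ax"
    by (rule bw2_valid) (rule S_le_width)
  moreover have "valid_on (S_carrier n) S_le wem_ax"
    by (rule wem_valid[OF Tau_in_S_carrier]) (simp add: S_le_Tau)
  ultimately have "\<forall>B\<in>{wPL_ax, bw2_ax, wem_ax}. valid_on (S_carrier n) S_le B"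
    by blast
  moreover have "in_ext {wPL_ax, bw2_ax, wem_ax} A"
    using assms by (simp add: Box_logic_def ext_logic_def)
  ultimately show ?thesis
    by (rule in_ext_valid[OF refl trans])
qed

section \<open>Derivations from hypotheses\<close>

locale ipc_extension =
  fixes G :: "form set"
begin

inductive derivable :: "form set \<Rightarrow> form \<Rightarrow> bool" for \<Gamma> :: "form set" where
  from_logic: "in_ext G A \<Longrightarrow> derivable \<Gamma> A"
| from_hyp: "A \<in> \<Gamma> \<Longrightarrow> derivable \<Gamma> A"
| mp: "derivable \<Gamma> (Imp A B) \<Longrightarrow> derivable \<Gamma> A \<Longrightarrow> derivable \<Gamma> B"

lemma derivable_axiom: "ipc_axiom A \<Longrightarrow> derivable \<Gamma> A"
  by (intro from_logic in_ext.ax)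

lemma derivable_mono: "derivable \<Gamma> A \<Longrightarrow> \<Gamma> \<subseteq> \<Delta> \<Longrightarrow> derivable \<Delta> A"
  by (induction rule: derivable.induct) (auto intro: derivable.intros)

lemma derivable_cut: "derivable \<Delta> B \<Longrightarrow> \<forall>A\<in>\<Delta>. derivable \<Gamma> A \<Longrightarrow> derivable \<Gamma> B"
  by (induction rule: derivable.induct) (auto intro: derivable.intros)

lemma derivable_empty_in_ext: "derivable {} A \<Longrightarrow> in_ext G A"
  by (induction rule: derivable.induct) (auto intro: in_ext.mp)

lemma derivable_finite_hyps:
  "derivable \<Gamma> A \<Longrightarrow> \<exists>F. finite F \<and> F \<subseteq> \<Gamma> \<and> derivable F A"
proof (induction rule: derivable.induct)
  case (from_logic A)
  then show ?case by (auto intro: derivable.from_logic)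
next
  case (from_hyp A)
  then show ?case by (intro exI[of _ "{A}"]) (auto intro: derivable.from_hyp)
next
  case (mp A B)
  then obtain F1 F2 where "finite F1" "F1 \<subseteq> \<Gamma>" "derivable F1 (Imp A B)"
    and "finite F2" "F2 \<subseteq> \<Gamma>" "derivable F2 A"
    by blast
  then show ?case
    by (intro exI[of _ "F1 \<union> F2"])
      (meson derivable.mp derivable_mono finite_UnI le_sup_iff sup_ge1 sup_ge2)
qed

lemma derivable_weaken_Imp: "derivable \<Gamma> B \<Longrightarrow> derivable \<Gamma> (Imp A B)"
  by (rule mp[OF derivable_axiom[OF ipc_axiom.intros(1)]])

lemma derivable_Imp_distrib:
  "derivable \<Gamma> (Imp A (Imp B C)) \<Longrightarrow> derivable \<Gamma> (Imp A B) \<Longrightarrow> derivable \<Gamma> (Imp A C)"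
  by (rule mp[OF mp[OF derivable_axiom[OF ipc_axiom.intros(2)]]])

lemma derivable_Imp_refl: "derivable \<Gamma> (Imp A A)"
  by (rule derivable_Imp_distrib[of _ _ "Imp A A"]) (rule derivable_axiom, rule ipc_axiom.intros)+

lemma deduction_theorem: "derivable (insert A \<Gamma>) B \<Longrightarrow> derivable \<Gamma> (Imp A B)"
proof (induction rule: derivable.induct)
  case (from_logic B)
  then show ?case by (intro derivable_weaken_Imp derivable.from_logic)
next
  case (from_hyp B)
  then show ?case by (auto intro: derivable_Imp_refl derivable_weaken_Imp derivable.from_hyp)
next
  case (mp B C)
  then show ?case using derivable_Imp_distrib by blast
qed

lemma derivable_AndI: "derivable \<Gamma> A \<Longrightarrow> derivable \<Gamma> B \<Longrightarrow> derivable \<Gamma> (And A B)"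
  by (rule mp[OF mp[OF derivable_axiom[OF ipc_axiom.intros(5)]]])

lemma derivable_AndD1: "derivable \<Gamma> (And A B) \<Longrightarrow> derivable \<Gamma> A"
  by (rule mp[OF derivable_axiom[OF ipc_axiom.intros(3)]])

lemma derivable_AndD2: "derivable \<Gamma> (And A B) \<Longrightarrow> derivable \<Gamma> B"
  by (rule mp[OF derivable_axiom[OF ipc_axiom.intros(4)]])

lemma derivable_OrI1: "derivable \<Gamma> A \<Longrightarrow> derivable \<Gamma> (Or A B)"
  by (rule mp[OF derivable_axiom[OF ipc_axiom.intros(6)]])

lemma derivable_OrI2: "derivable \<Gamma> B \<Longrightarrow> derivable \<Gamma> (Or A B)"
  by (rule mp[OF derivable_axiom[OF ipc_axiom.intros(7)]])

lemma derivable_OrE: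
  "derivable \<Gamma> (Or A B) \<Longrightarrow> derivable (insert A \<Gamma>) C \<Longrightarrow> derivable (insert B \<Gamma>) C \<Longrightarrow>
   derivable \<Gamma> C"
  by (rule mp[OF mp[OF mp[OF derivable_axiom[OF ipc_axiom.intros(8)]]]])
    (auto intro: deduction_theorem)

lemma derivable_BotE: "derivable \<Gamma> Bot \<Longrightarrow> derivable \<Gamma> A"
  by (rule mp[OF derivable_axiom[OF ipc_axiom.intros(9)]])

definition deductively_closed :: "form set \<Rightarrow> bool" where
  "deductively_closed T \<longleftrightarrow> (\<forall>A. derivable T A \<longrightarrow> A \<in> T)"

definition prime_theory :: "form set \<Rightarrow> bool" where
  "prime_theory T \<longleftrightarrow>
     deductively_closed T \<and> Bot \<notin> T \<and> (\<forall>A B. Or A B \<in> T \<longrightarrow> A \<in> T \<or> B \<in> T)"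

definition maximal_without :: "form set \<Rightarrow> form \<Rightarrow> bool" where
  "maximal_without T D \<longleftrightarrow> D \<notin> T \<and> (\<forall>T'. prime_theory T' \<longrightarrow> T \<subset> T' \<longrightarrow> D \<in> T')"

lemma deductively_closed_consequences: "deductively_closed {A. derivable \<Gamma> A}"
  unfolding deductively_closed_def by (auto intro: derivable_cut)

lemma deductively_closed_Union_chain:
  assumes "C \<noteq> {}" and "subset.chain X C" and "\<forall>T\<in>C. deductively_closed T"
  shows "deductively_closed (\<Union>C)"
  unfolding deductively_closed_def
proof (intro allI impI)
  fix A assume "derivable (\<Union>C) A"
  then obtain F where F: "finite F" "F \<subseteq> \<Union>C" "derivable F A"
    using derivable_finite_hyps by blast
  then obtain T where "T \<in> C" "F \<subseteq> T"
    using finite_subset_Union_chain assms(1,2) by blast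
  then have "derivable T A"
    using F(3) derivable_mono by blast
  then show "A \<in> \<Union>C"
    using \<open>T \<in> C\<close> assms(3) by (auto simp: deductively_closed_def)
qed

lemma lindenbaum:
  assumes "\<not> derivable \<Gamma> \<phi>"
  shows "\<exists>T. prime_theory T \<and> \<Gamma> \<subseteq> T \<and> maximal_without T \<phi>"
proof -
  define X where "X = {T. deductively_closed T \<and> \<Gamma> \<subseteq> T \<and> \<phi> \<notin> T}"
  have "{A. derivable \<Gamma> A} \<in> X"
    using assms deductively_closed_consequences by (auto simp: X_def intro: from_hyp)
  moreover have "\<Union>C \<in> X" if "C \<noteq> {}" and "subset.chain X C" for C
    using that deductively_closed_Union_chain[OF that]
    by (auto simp: X_def subset_chain_def)
  ultimately have "\<forall>C\<in>chains X. \<exists>U\<in>X. \<forall>T\<in>C. T \<subseteq> U"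
    unfolding chains_alt_def by (metis Union_upper empty_iff mem_Collect_eq)
  then obtain M where M: "M \<in> X" and max: "\<forall>T\<in>X. M \<subseteq> T \<longrightarrow> T = M"
    using Zorn_Lemma2[of X] by blast
  have closed: "deductively_closed M" and "\<Gamma> \<subseteq> M" and "\<phi> \<notin> M"
    using M by (auto simp: X_def)
  have omits: "\<phi> \<in> T" if "deductively_closed T" and "M \<subset> T" for T
    using that max \<open>\<Gamma> \<subseteq> M\<close> by (auto simp: X_def)
  have extend: "derivable (insert B M) \<phi>" if "B \<notin> M" for B
    using omits[OF deductively_closed_consequences, of "insert B M"] that
    by (auto intro: from_hyp)
  have "derivable M \<phi>" if "Bot \<in> M"
    using that by (auto intro: derivable_BotE from_hyp)
  moreover have "derivable M \<phi>" if "Or A B \<in> M" "A \<notin> M" "B \<notin> M" for A B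
    using that by (auto intro: derivable_OrE from_hyp extend)
  ultimately have "prime_theory M"
    using closed \<open>\<phi> \<notin> M\<close> unfolding prime_theory_def deductively_closed_def by blast
  moreover have "maximal_without M \<phi>"
    using \<open>\<phi> \<notin> M\<close> omits by (simp add: maximal_without_def prime_theory_def)
  ultimately show ?thesis
    using \<open>\<Gamma> \<subseteq> M\<close> by blast
qed

lemma prime_theory_derivable: "prime_theory T \<Longrightarrow> derivable T A \<Longrightarrow> A \<in> T"
  by (simp add: prime_theory_def deductively_closed_def)

lemma prime_theory_Bot: "prime_theory T \<Longrightarrow> Bot \<notin> T"
  by (simp add: prime_theory_def)

lemma prime_theory_And_iff: "prime_theory T \<Longrightarrow> And A B \<in> T \<longleftrightarrow> A \<in> T \<and> B \<in> T"
  by (meson derivable_AndD1 derivable_AndD2 derivable_AndI from_hyp prime_theory_derivable)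

lemma prime_theory_Or_iff: "prime_theory T \<Longrightarrow> Or A B \<in> T \<longleftrightarrow> A \<in> T \<or> B \<in> T"
  by (meson derivable_OrI1 derivable_OrI2 from_hyp prime_theory_def prime_theory_derivable)

lemma prime_theory_mp: "prime_theory T \<Longrightarrow> Imp A B \<in> T \<Longrightarrow> A \<in> T \<Longrightarrow> B \<in> T"
  by (meson derivable.mp from_hyp prime_theory_derivable)

lemma prime_theory_Imp_weaken: "prime_theory T \<Longrightarrow> B \<in> T \<Longrightarrow> Imp A B \<in> T"
  by (meson derivable_weaken_Imp from_hyp prime_theory_derivable)

lemma prime_theory_subst_hyp: "prime_theory T \<Longrightarrow> A \<in> G \<Longrightarrow> subst s A \<in> T"
  by (meson from_logic in_ext.hyp prime_theory_derivable)

lemma prime_theory_Imp_Bot_Bot: "prime_theory T \<Longrightarrow> Imp Bot Bot \<in> T"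
  by (meson derivable_Imp_refl prime_theory_derivable)

lemma prime_theory_Imp_witness:
  assumes "prime_theory T" and "Imp A B \<notin> T"
  obtains T' where "prime_theory T'" "maximal_without T' B" "T \<subseteq> T'" "A \<in> T'"
proof -
  have "\<not> derivable (insert A T) B"
    using assms deduction_theorem prime_theory_derivable by blast
  then show ?thesis
    using lindenbaum that by blast
qed

lemma maximal_without_Bot_Imp:
  assumes "prime_theory t" and "maximal_without t Bot" and "Imp B C \<notin> t"
  shows "B \<in> t \<and> C \<notin> t"
proof
  obtain t' where "prime_theory t'" "t \<subseteq> t'" "B \<in> t'"
    using prime_theory_Imp_witness[OF assms(1,3)] by blast
  moreover have "t' = t"
    using assms(2) calculation prime_theory_Bot unfolding maximal_without_def by blast
  ultimately show "B \<in> t" by simp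
  show "C \<notin> t"
    using assms prime_theory_Imp_weaken by blast
qed

lemma derivable_Un_prime_theory:
  assumes "derivable (u \<union> v) \<phi>" and "prime_theory u"
  shows "\<exists>a\<in>u. derivable v (Imp a \<phi>)"
  using assms(1)
proof (induction rule: derivable.induct)
  case (from_logic A)
  then show ?case
    using prime_theory_Imp_Bot_Bot[OF assms(2)]
    by (blast intro: derivable_weaken_Imp derivable.from_logic)
next
  case (from_hyp A)
  then show ?case
    using prime_theory_Imp_Bot_Bot[OF assms(2)]
    by (blast intro: derivable_Imp_refl derivable_weaken_Imp derivable.from_hyp)
next
  case (mp A B)
  then obtain a1 a2 where "a1 \<in> u" "derivable v (Imp a1 (Imp A B))"
    and "a2 \<in> u" "derivable v (Imp a2 A)"
    by blast
  then have "derivable (insert (And a1 a2) v) B"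
    by (meson derivable.mp derivable_AndD1 derivable_AndD2 derivable_mono from_hyp insertI1
        subset_insertI)
  then have "derivable v (Imp (And a1 a2) B)"
    by (rule deduction_theorem)
  moreover have "And a1 a2 \<in> u"
    using \<open>a1 \<in> u\<close> \<open>a2 \<in> u\<close> prime_theory_And_iff[OF assms(2)] by blast
  ultimately show ?case by blast
qed

lemma wPL_prime_theories:
  assumes "wPL_ax \<in> G"
    and "prime_theory w" "prime_theory u" "prime_theory v" "prime_theory z"
    and "w \<subseteq> u" "w \<subseteq> v" "maximal_without u D" "\<not> u \<subseteq> v" "u \<subset> z"
  shows "v \<subseteq> z"
proof
  fix c assume "c \<in> v"
  obtain a where "a \<in> u" "a \<notin> v" using assms(9) by blast
  \<comment> \<open>u is maximal among the prime theories omitting p, and p is not in v\<close>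
  define p where "p = And D a"
  have "Or (Imp c p) (Imp (Imp (Imp p c) p) p) \<in> w"
    using prime_theory_subst_hyp[OF assms(2,1), of "\<lambda>n. if n = 0 then p else c"]
    by (simp add: wPL_ax_def)
  moreover have "Imp c p \<notin> w"
    using \<open>c \<in> v\<close> \<open>a \<notin> v\<close> assms(4,7) prime_theory_mp prime_theory_And_iff p_def by blast
  ultimately have "Imp (Imp (Imp p c) p) p \<in> u"
    using assms(2,6) prime_theory_Or_iff by blast
  moreover have "p \<notin> u"
    using assms(3,8) prime_theory_And_iff p_def maximal_without_def by blast
  ultimately have "Imp (Imp p c) p \<notin> u"
    using assms(3) prime_theory_mp by blast
  then obtain u' where u': "prime_theory u'" "maximal_without u' p" "u \<subseteq> u'" "Imp p c \<in> u'"
    by (rule prime_theory_Imp_witness[OF assms(3)])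
  have "u' = u"
  proof (rule ccontr)
    assume "u' \<noteq> u"
    then have "D \<in> u'"
      using u'(1,3) assms(8) maximal_without_def by blast
    then have "p \<in> u'"
      using u'(1,3) \<open>a \<in> u\<close> prime_theory_And_iff p_def by blast
    then show False using u'(2) maximal_without_def by blast
  qed
  then have "Imp p c \<in> z" and "p \<in> z"
    using u'(4) assms(10) \<open>a \<in> u\<close> prime_theory_And_iff[OF assms(5)] assms(5,8)
    by (auto simp: p_def maximal_without_def)
  then show "c \<in> z"
    using assms(5) prime_theory_mp by blast
qed

lemma bw2_prime_theories:
  assumes "bw2_ax \<in> G"
    and w: "prime_theory w" and y: "prime_theory y1" "prime_theory y2" "prime_theory y3"
    and "w \<subseteq> y1" "w \<subseteq> y2" "w \<subseteq> y3"
  shows "y1 \<subseteq> y2 \<or> y2 \<subseteq> y1 \<or> y1 \<subseteq> y3 \<or> y3 \<subseteq> y1 \<or> y2 \<subseteq> y3 \<or> y3 \<subseteq> y2"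
proof (rule ccontr)
  assume "\<not> ?thesis"
  then obtain a12 a13 a21 a23 a31 a32 where
    "a12 \<in> y1" "a12 \<notin> y2" "a13 \<in> y1" "a13 \<notin> y3" "a21 \<in> y2" "a21 \<notin> y1"
    "a23 \<in> y2" "a23 \<notin> y3" "a31 \<in> y3" "a31 \<notin> y1" "a32 \<in> y3" "a32 \<notin> y2"
    by blast
  moreover define a1 a2 a3 where "a1 = And a12 a13" and "a2 = And a21 a23" and "a3 = And a31 a32"
  ultimately have
    a1: "a1 \<in> y1" "a1 \<notin> y2" "a1 \<notin> y3" and
    a2: "a2 \<in> y2" "a2 \<notin> y1" "a2 \<notin> y3" and
    a3: "a3 \<in> y3" "a3 \<notin> y1" "a3 \<notin> y2"
    using y by (simp_all add: prime_theory_And_iff)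
  have "Or (Imp a1 (Or a2 a3)) (Or (Imp a2 (Or a1 a3)) (Imp a3 (Or a1 a2))) \<in> w"
    using prime_theory_subst_hyp[OF w assms(1),
        of "\<lambda>n. if n = 0 then a1 else if n = 1 then a2 else a3"]
    by (simp add: bw2_ax_def)
  then consider "Imp a1 (Or a2 a3) \<in> w" | "Imp a2 (Or a1 a3) \<in> w" | "Imp a3 (Or a1 a2) \<in> w"
    using w prime_theory_Or_iff by blast
  then show False
  proof cases
    case 1
    then have "Or a2 a3 \<in> y1" using a1 y(1) \<open>w \<subseteq> y1\<close> prime_theory_mp by blast
    then show False using a2 a3 y(1) prime_theory_Or_iff by blast
  next
    case 2
    then have "Or a1 a3 \<in> y2" using a2 y(2) \<open>w \<subseteq> y2\<close> prime_theory_mp by blast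
    then show False using a1 a3 y(2) prime_theory_Or_iff by blast
  next
    case 3
    then have "Or a1 a2 \<in> y3" using a3 y(3) \<open>w \<subseteq> y3\<close> prime_theory_mp by blast
    then show False using a1 a2 y(3) prime_theory_Or_iff by blast
  qed
qed

lemma wem_prime_theories:
  assumes "wem_ax \<in> G"
    and "prime_theory w" "prime_theory u" "prime_theory v" "w \<subseteq> u" "w \<subseteq> v"
  shows "\<not> derivable (u \<union> v) Bot"
proof
  assume "derivable (u \<union> v) Bot"
  then obtain a where "a \<in> u" "derivable v (Imp a Bot)"
    using derivable_Un_prime_theory assms(3) by blast
  then have "Imp a Bot \<in> v"
    using assms(4) prime_theory_derivable by blast
  moreover have "Or (Imp a Bot) (Imp (Imp a Bot) Bot) \<in> w"
    using prime_theory_subst_hyp[OF assms(2,1), of "\<lambda>n. a"] by (simp add: wem_ax_def Neg_def)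
  ultimately consider "Imp a Bot \<in> w" | "Imp (Imp a Bot) Bot \<in> w"
    using assms(2) prime_theory_Or_iff by blast
  then show False
  proof cases
    case 1
    then have "Bot \<in> u" using \<open>a \<in> u\<close> assms(3,5) prime_theory_mp by blast
    then show False using assms(3) prime_theory_Bot by blast
  next
    case 2
    then have "Bot \<in> v" using \<open>Imp a Bot \<in> v\<close> assms(4,6) prime_theory_mp by blast
    then show False using assms(4) prime_theory_Bot by blast
  qed
qed

lemma wem_common_top:
  assumes "wem_ax \<in> G"
    and "prime_theory w" "prime_theory u" "prime_theory v" "w \<subseteq> u" "w \<subseteq> v"
  obtains t where "prime_theory t" "maximal_without t Bot" "u \<union> v \<subseteq> t"
  using lindenbaum[OF wem_prime_theories[OF assms]] that by blast

section \<open>Canonical maps\<close>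

definition canonical_map :: "form set \<Rightarrow> 'a set \<Rightarrow> ('a \<Rightarrow> 'a \<Rightarrow> bool) \<Rightarrow> ('a \<Rightarrow> form set) \<Rightarrow> bool"
  where "canonical_map Sig W R f \<longleftrightarrow>
    (\<forall>x\<in>W. prime_theory (f x)) \<and>
    (\<forall>x\<in>W. \<forall>y\<in>W. R x y \<longrightarrow> f x \<subseteq> f y) \<and>
    (\<forall>x\<in>W. \<forall>B C. Imp B C \<in> Sig \<longrightarrow> Imp B C \<notin> f x \<longrightarrow> (\<exists>y\<in>W. R x y \<and> B \<in> f y \<and> C \<notin> f y))"

lemma canonical_map_prime: "canonical_map Sig W R f \<Longrightarrow> x \<in> W \<Longrightarrow> prime_theory (f x)"
  by (simp add: canonical_map_def)

lemma canonical_map_mono: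
  "canonical_map Sig W R f \<Longrightarrow> x \<in> W \<Longrightarrow> y \<in> W \<Longrightarrow> R x y \<Longrightarrow> f x \<subseteq> f y"
  by (simp add: canonical_map_def)

lemma canonical_map_witness:
  "canonical_map Sig W R f \<Longrightarrow> x \<in> W \<Longrightarrow> Imp B C \<in> Sig \<Longrightarrow> Imp B C \<notin> f x \<Longrightarrow>
   \<exists>y\<in>W. R x y \<and> B \<in> f y \<and> C \<notin> f y"
  by (simp add: canonical_map_def)

lemma canonical_map_truth:
  assumes f: "canonical_map Sig W R f" and "subformulas \<phi> \<subseteq> Sig" and "x \<in> W"
  shows "forces W R (\<lambda>n. {y\<in>W. Var n \<in> f y}) x \<phi> \<longleftrightarrow> \<phi> \<in> f x"
  using assms(2,3)
proof (induction \<phi> arbitrary: x)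
  case Bot
  then show ?case using f prime_theory_Bot by (simp add: canonical_map_def)
next
  case (And B C)
  then show ?case using f prime_theory_And_iff by (simp add: canonical_map_def)
next
  case (Or B C)
  then show ?case using f prime_theory_Or_iff by (simp add: canonical_map_def)
next
  case (Imp B C)
  have IH: "forces W R (\<lambda>n. {y\<in>W. Var n \<in> f y}) y D \<longleftrightarrow> D \<in> f y"
    if "D \<in> {B, C}" and "y \<in> W" for D y
    using Imp that by auto
  show ?case
  proof
    assume forced: "forces W R (\<lambda>n. {y\<in>W. Var n \<in> f y}) x (Imp B C)"
    show "Imp B C \<in> f x"
    proof (rule ccontr)
      assume "Imp B C \<notin> f x"
      then obtain y where "y \<in> W" "R x y" "B \<in> f y" "C \<notin> f y"
        using f Imp.prems subformulas_refl unfolding canonical_map_def by blast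
      then show False using forced IH by auto
    qed
  next
    assume "Imp B C \<in> f x"
    then have "C \<in> f y" if "y \<in> W" "R x y" "B \<in> f y" for y
      using f Imp.prems(2) that prime_theory_mp unfolding canonical_map_def by blast
    then show "forces W R (\<lambda>n. {y\<in>W. Var n \<in> f y}) x (Imp B C)"
      using IH by auto
  qed
qed simp

lemma canonical_map_refutes:
  assumes "canonical_map Sig W R f" and "subformulas \<phi> \<subseteq> Sig" and "x \<in> W" and "\<phi> \<notin> f x"
  shows "\<not> valid_on W R \<phi>"
proof -
  have "\<forall>n. upset W R {y\<in>W. Var n \<in> f y}"
    using assms(1) by (auto simp: canonical_map_def upset_def)
  then show ?thesis
    using canonical_map_truth[OF assms(1-3)] assms(3,4) by (auto simp: valid_on_def)
qed

end

section \<open>Canonical maps on S_n, layer by layer\<close>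

(* S_upper m is S_(m+2) without its root: the layers L_m, ..., L_0 and the top.  Canonical maps
   are built on it by adding layers at the bottom. *)
definition S_upper :: "nat \<Rightarrow> spt set" where
  "S_upper m = insert Tau {Lay j c | j c. j \<le> m}"

definition defect :: "form set \<Rightarrow> form set \<Rightarrow> form \<Rightarrow> form \<Rightarrow> bool" where
  "defect Sig x B C \<longleftrightarrow> Imp B C \<in> Sig \<and> Imp B C \<notin> x \<and> B \<notin> x"

lemma S_upper_0: "S_upper 0 = {Tau, Lay 0 True, Lay 0 False}"
  by (auto simp: S_upper_def)

lemma S_upper_Suc: "S_upper (Suc m) = {Lay (Suc m) True, Lay (Suc m) False} \<union> S_upper m"
  by (auto simp: S_upper_def le_Suc_eq)

lemma Lay_Suc_notin_S_upper: "Lay (Suc m) c \<notin> S_upper m"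
  by (simp add: S_upper_def)

lemma S_le_Lay_Suc_S_upper: "x \<in> S_upper m \<Longrightarrow> S_le (Lay (Suc m) c) x"
  by (auto simp: S_upper_def)

lemma S_upper_not_le_Lay_Suc: "x \<in> S_upper m \<Longrightarrow> \<not> S_le x (Lay (Suc m) c)"
  by (auto simp: S_upper_def)

lemma S_upper_above_layer: "x \<in> S_upper m \<Longrightarrow> \<exists>c. S_le (Lay m c) x"
  by (auto simp: S_upper_def)

lemma S_carrier_Suc_Suc: "S_carrier (Suc (Suc m)) = insert Rho (S_upper m)"
  by (auto simp: S_carrier_def S_upper_def less_Suc_eq_le)

context ipc_extension
begin

lemma canonical_map_S_upper_0:
  assumes ab: "prime_theory a" "prime_theory b"
    and t: "prime_theory t" "maximal_without t Bot" "a \<union> b \<subseteq> t"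
    and no_defects: "\<forall>x\<in>{a, b}. \<forall>B C. \<not> defect Sig x B C"
  shows "canonical_map Sig (S_upper 0) S_le ((\<lambda>_. t)(Lay 0 True := a, Lay 0 False := b))"
    (is "canonical_map Sig _ _ ?g")
  unfolding canonical_map_def
proof (intro conjI ballI allI impI)
  fix x assume x: "x \<in> S_upper 0"
  show "prime_theory (?g x)"
    using x ab t(1) by (auto simp: S_upper_0)
  show "?g x \<subseteq> ?g y" if "y \<in> S_upper 0" "S_le x y" for y
    using x that t(3) by (auto simp: S_upper_0)
  fix B C assume BC: "Imp B C \<in> Sig" "Imp B C \<notin> ?g x"
  show "\<exists>y\<in>S_upper 0. S_le x y \<and> B \<in> ?g y \<and> C \<notin> ?g y"
  proof (cases "x = Tau")
    case True
    then have "Imp B C \<notin> t"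
      using BC(2) by simp
    then have "B \<in> t \<and> C \<notin> t"
      by (rule maximal_without_Bot_Imp[OF t(1,2)])
    then show ?thesis
      using True by (intro bexI[of _ Tau]) (simp_all add: S_upper_0)
  next
    case False
    then have gx: "?g x \<in> {a, b}"
      using x by (auto simp: S_upper_0)
    then have "\<not> defect Sig (?g x) B C"
      using no_defects by blast
    then have "B \<in> ?g x"
      using BC by (simp add: defect_def)
    moreover have "C \<notin> ?g x"
      using gx BC(2) ab prime_theory_Imp_weaken by blast
    ultimately show ?thesis
      using x reflp_S_le[THEN reflpD] by blast
  qed
qed

lemma canonical_map_S_upper_Suc:
  assumes g: "canonical_map Sig (S_upper m) S_le g"
    and ab: "prime_theory a" "prime_theory b" "a \<union> b \<subseteq> g (Lay m True) \<inter> g (Lay m False)"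
    and defects: "\<forall>x\<in>{a, b}. \<forall>B C. defect Sig x B C \<longrightarrow> Imp B C \<notin> g (Lay m True) \<inter> g (Lay m False)"
  shows "canonical_map Sig (S_upper (Suc m)) S_le
           (g(Lay (Suc m) True := a, Lay (Suc m) False := b))"
    (is "canonical_map Sig _ _ ?g")
proof -
  have Lay_m: "Lay m c \<in> S_upper m" for c
    by (simp add: S_upper_def)
  have new: "?g (Lay (Suc m) c) \<in> {a, b}" for c
    by simp
  have old: "?g x = g x" if "x \<in> S_upper m" for x
    using that Lay_Suc_notin_S_upper by auto
  have below_old: "a \<union> b \<subseteq> g x" if x: "x \<in> S_upper m" for x
  proof -
    obtain c where "S_le (Lay m c) x"
      using S_upper_above_layer[OF x] by blast
    then have "g (Lay m c) \<subseteq> g x"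
      using canonical_map_mono[OF g Lay_m x] by blast
    then show ?thesis using ab(3) by (cases c) auto
  qed
  have new_witness: "\<exists>y\<in>S_upper (Suc m). S_le (Lay (Suc m) c) y \<and> B \<in> ?g y \<and> C \<notin> ?g y"
    if BC: "Imp B C \<in> Sig" "Imp B C \<notin> ?g (Lay (Suc m) c)" for c B C
  proof (cases "B \<in> ?g (Lay (Suc m) c)")
    case True
    moreover have "C \<notin> ?g (Lay (Suc m) c)"
      using BC(2) new ab(1,2) prime_theory_Imp_weaken by blast
    ultimately show ?thesis
      by (intro bexI[of _ "Lay (Suc m) c"]) (auto simp: S_upper_Suc)
  next
    case False
    then have "defect Sig (?g (Lay (Suc m) c)) B C"
      using BC by (simp add: defect_def)
    then have "Imp B C \<notin> g (Lay m True) \<inter> g (Lay m False)"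
      using defects new by blast
    then obtain d where "Imp B C \<notin> g (Lay m d)"
      by (metis Int_iff)
    then obtain y where "y \<in> S_upper m" "B \<in> g y" "C \<notin> g y"
      using canonical_map_witness[OF g Lay_m BC(1)] by blast
    then show ?thesis
      using old S_le_Lay_Suc_S_upper by (auto simp: S_upper_Suc)
  qed
  show ?thesis
    unfolding canonical_map_def
  proof (intro conjI ballI allI impI)
    fix x assume x: "x \<in> S_upper (Suc m)"
    show "prime_theory (?g x)"
      using x canonical_map_prime[OF g] ab(1,2) old by (auto simp: S_upper_Suc)
    show "?g x \<subseteq> ?g y" if y: "y \<in> S_upper (Suc m)" and "S_le x y" for y
    proof (cases "x \<in> S_upper m")
      case True
      then have "y \<in> S_upper m"
        using y \<open>S_le x y\<close> S_upper_not_le_Lay_Suc by (auto simp: S_upper_Suc)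
      then show ?thesis
        using True old canonical_map_mono[OF g] \<open>S_le x y\<close> by simp
    next
      case False
      then obtain c where c: "x = Lay (Suc m) c"
        using x by (auto simp: S_upper_Suc)
      show ?thesis
      proof (cases "y \<in> S_upper m")
        case True
        then show ?thesis
          using c old below_old new by blast
      next
        case False
        then show ?thesis
          using c y \<open>S_le x y\<close> by (auto simp: S_upper_Suc)
      qed
    qed
    show "\<exists>y\<in>S_upper (Suc m). S_le x y \<and> B \<in> ?g y \<and> C \<notin> ?g y"
      if BC: "Imp B C \<in> Sig" "Imp B C \<notin> ?g x" for B C
    proof (cases "x \<in> S_upper m")
      case True
      then obtain y where "y \<in> S_upper m" "S_le x y" "B \<in> g y" "C \<notin> g y"
        using canonical_map_witness[OF g True BC(1)] BC(2) old by auto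
      then show ?thesis
        using old by (auto simp: S_upper_Suc)
    next
      case False
      then obtain c where "x = Lay (Suc m) c"
        using x by (auto simp: S_upper_Suc)
      then show ?thesis
        using new_witness BC by blast
    qed
  qed
qed

lemma canonical_map_S_carrier:
  assumes g: "canonical_map Sig (S_upper m) S_le g" and "g (Lay m True) = r" "g (Lay m False) = r"
  shows "canonical_map Sig (S_carrier (Suc (Suc m))) S_le (g(Rho := r))"
    (is "canonical_map Sig _ _ ?g")
proof -
  have Lay_m: "Lay m c \<in> S_upper m" for c
    by (simp add: S_upper_def)
  have Rho: "Rho \<notin> S_upper m"
    by (simp add: S_upper_def)
  have Lay_m_r: "g (Lay m c) = r" for c
    using assms(2,3) by (cases c) auto
  have below: "r \<subseteq> g x" if x: "x \<in> S_upper m" for x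
  proof -
    obtain c where "S_le (Lay m c) x"
      using S_upper_above_layer[OF x] by blast
    then show ?thesis
      using g x Lay_m Lay_m_r unfolding canonical_map_def by metis
  qed
  show ?thesis
    unfolding canonical_map_def S_carrier_Suc_Suc
  proof (intro conjI ballI allI impI)
    fix x assume x: "x \<in> insert Rho (S_upper m)"
    show "prime_theory (?g x)"
      using x g Rho Lay_m assms(2) by (auto simp: canonical_map_def)
    show "?g x \<subseteq> ?g y" if y: "y \<in> insert Rho (S_upper m)" and "S_le x y" for y
    proof (cases "x = Rho")
      case True
      then show ?thesis using y Rho below by auto
    next
      case False
      moreover have "y \<noteq> Rho" using \<open>S_le x y\<close> False by (cases x) auto
      ultimately show ?thesis
        using x y \<open>S_le x y\<close> g Rho by (auto simp: canonical_map_def)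
    qed
    show "\<exists>y\<in>insert Rho (S_upper m). S_le x y \<and> B \<in> ?g y \<and> C \<notin> ?g y"
      if "Imp B C \<in> Sig" "Imp B C \<notin> ?g x" for B C
    proof -
      obtain x' where "x' \<in> S_upper m" "S_le x x'" "Imp B C \<notin> g x'"
      proof (cases "x = Rho")
        case True
        then show ?thesis
          using that Lay_m Lay_m_r \<open>Imp B C \<notin> ?g x\<close> by auto
      next
        case False
        then show ?thesis
          using that x \<open>Imp B C \<notin> ?g x\<close> reflp_S_le[THEN reflpD] by auto
      qed
      then obtain y where "y \<in> S_upper m" "S_le x y" "B \<in> g y" "C \<notin> g y"
        using g \<open>Imp B C \<in> Sig\<close> transp_S_le[THEN transpD] unfolding canonical_map_def by blast
      then show ?thesis
        using Rho by auto
    qed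
  qed
qed

end

section \<open>Stacking layers\<close>

lemma finite_minimal_pair:
  fixes W :: "'a::order set"
  assumes "finite W" and "W \<noteq> {}"
    and width: "\<And>x y z. x \<in> W \<Longrightarrow> y \<in> W \<Longrightarrow> z \<in> W \<Longrightarrow>
                  x \<le> y \<or> y \<le> x \<or> x \<le> z \<or> z \<le> x \<or> y \<le> z \<or> z \<le> y"
  obtains y1 y2 where "y1 \<in> W" "y2 \<in> W" "y1 = y2 \<or> \<not> y1 \<le> y2 \<and> \<not> y2 \<le> y1"
    "\<forall>z\<in>W. y1 \<le> z \<or> y2 \<le> z"
proof -
  define Y where "Y = {y\<in>W. \<forall>z\<in>W. z \<le> y \<longrightarrow> z = y}"
  have below_Y: "\<exists>y\<in>Y. y \<le> z" if "z \<in> W" for z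
    using finite_has_minimal2[OF assms(1) that] by (auto simp: Y_def)
  have Y_antichain: "y = y' \<or> \<not> y \<le> y' \<and> \<not> y' \<le> y" if "y \<in> Y" "y' \<in> Y" for y y'
    using that by (auto simp: Y_def)
  obtain y1 where y1: "y1 \<in> Y"
    using below_Y assms(2) by blast
  obtain y2 where y2: "y2 \<in> Y" and "Y \<subseteq> {y1, y2}"
  proof (cases "Y \<subseteq> {y1}")
    case True
    then show ?thesis using that y1 by blast
  next
    case False
    then obtain y2 where "y2 \<in> Y" "y2 \<noteq> y1" by blast
    moreover have "y3 \<in> {y1, y2}" if "y3 \<in> Y" for y3
      using width[of y1 y2 y3] Y_antichain y1 \<open>y2 \<in> Y\<close> \<open>y2 \<noteq> y1\<close> that
      by (auto simp: Y_def)
    ultimately show ?thesis using that by blast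
  qed
  moreover have "y1 \<in> W" "y2 \<in> W"
    using y1 y2 by (auto simp: Y_def)
  ultimately show ?thesis
    using that Y_antichain[OF y1 y2] below_Y by blast
qed

lemma card_diff_add_less:
  assumes "finite S" and "a \<union> b \<subseteq> y1 \<inter> y2" and "\<not> S \<inter> y1 \<subseteq> a \<inter> b"
  shows "card (S - y1) + card (S - y2) < card (S - a) + card (S - b)"
proof -
  have le: "card (S - y) \<le> card (S - x)" if "x \<in> {a, b}" "y \<in> {y1, y2}" for x y
    using assms(1,2) that by (intro card_mono) auto
  obtain x where "x \<in> {a, b}" and "\<not> S \<inter> y1 \<subseteq> x"
    using assms(3) by blast
  then have "card (S - y1) < card (S - x)"
    using assms(1,2) by (intro psubset_card_mono) auto
  moreover have "card (S - y2) \<le> card (S - a)" and "card (S - y2) \<le> card (S - b)"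
    using le by simp_all
  ultimately show ?thesis
    using \<open>x \<in> {a, b}\<close> by auto
qed

locale layer_construction = ipc_extension +
  fixes Sig :: "form set" and w0 :: "form set"
  assumes wPL: "wPL_ax \<in> G" and bw2: "bw2_ax \<in> G" and wem: "wem_ax \<in> G"
    and finite_Sig: "finite Sig" and Sig_Imp: "Imp B C \<in> Sig \<Longrightarrow> B \<in> Sig \<and> C \<in> Sig"
    and root: "prime_theory w0"
begin

definition admissible :: "form set \<Rightarrow> bool" where
  "admissible T \<longleftrightarrow> prime_theory T \<and> w0 \<subseteq> T \<and> (\<exists>D. maximal_without T D)"

definition layer :: "form set \<Rightarrow> form set \<Rightarrow> bool" where
  "layer a b \<longleftrightarrow> admissible a \<and> admissible b \<and> (a = b \<or> \<not> a \<subseteq> b \<and> \<not> b \<subseteq> a)"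

lemma defect_witness:
  assumes "layer a b" and "x \<in> {a, b}" and "defect Sig x B C"
  obtains z where "admissible z" "a \<union> b \<subseteq> z" "B \<in> z" "C \<notin> z"
proof -
  have ab: "admissible a" "admissible b" and incomparable: "a = b \<or> \<not> a \<subseteq> b \<and> \<not> b \<subseteq> a"
    using assms(1) by (auto simp: layer_def)
  then have x: "prime_theory x" "w0 \<subseteq> x" and "\<exists>D. maximal_without x D"
    using assms(2) by (auto simp: admissible_def)
  then obtain D where D: "maximal_without x D" by blast
  have "Imp B C \<notin> x" and "B \<notin> x"
    using assms(3) by (simp_all add: defect_def)
  then obtain z where z: "prime_theory z" "maximal_without z C" "x \<subseteq> z" "B \<in> z"
    using prime_theory_Imp_witness[OF x(1)] by blast
  have "x \<subset> z"
    using z(3,4) \<open>B \<notin> x\<close> by blast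
  have below: "y \<subseteq> z" if y: "y \<in> {a, b}" for y
  proof (cases "y = x")
    case False
    then have "\<not> x \<subseteq> y"
      using assms(2) y incomparable by auto
    moreover have "prime_theory y" "w0 \<subseteq> y"
      using y ab by (auto simp: admissible_def)
    ultimately show ?thesis
      using wPL_prime_theories[OF wPL root x(1) _ z(1) x(2) _ D _ \<open>x \<subset> z\<close>] by blast
  qed (use \<open>x \<subset> z\<close> in blast)
  then have "a \<union> b \<subseteq> z"
    by simp
  moreover have "admissible z"
    using x z by (auto simp: admissible_def)
  moreover have "C \<notin> z"
    using z(2) by (simp add: maximal_without_def)
  ultimately show ?thesis
    using that z(4) by blast
qed

lemma defect_witnesses:
  assumes "layer a b"
  obtains W where "finite W"
    "\<forall>z\<in>W. admissible z \<and> a \<union> b \<subseteq> z \<and> \<not> Sig \<inter> z \<subseteq> a \<inter> b"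
    "\<forall>x\<in>{a, b}. \<forall>B C. defect Sig x B C \<longrightarrow> (\<exists>z\<in>W. B \<in> z \<and> C \<notin> z)"
proof -
  define Ds where "Ds = {(x, B, C). x \<in> {a, b} \<and> defect Sig x B C}"
  have "Ds \<subseteq> {a, b} \<times> Sig \<times> Sig"
    by (auto simp: Ds_def defect_def dest: Sig_Imp)
  then have "finite Ds"
    using finite_Sig by (simp add: finite_subset)
  have "\<exists>z. admissible z \<and> a \<union> b \<subseteq> z \<and> fst (snd d) \<in> z \<and> snd (snd d) \<notin> z" if dDs: "d \<in> Ds" for d
  proof -
    obtain x B C where d: "d = (x, B, C)" "x \<in> {a, b}" "defect Sig x B C"
      using dDs by (auto simp: Ds_def)
    then obtain z where "admissible z" "a \<union> b \<subseteq> z" "B \<in> z" "C \<notin> z"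
      using defect_witness[OF assms] by blast
    then show ?thesis
      using d(1) by auto
  qed
  then have "\<forall>d\<in>Ds. \<exists>z. admissible z \<and> a \<union> b \<subseteq> z \<and> fst (snd d) \<in> z \<and> snd (snd d) \<notin> z"
    by blast
  then obtain wit where wit: "\<forall>d\<in>Ds. admissible (wit d) \<and> a \<union> b \<subseteq> wit d \<and>
      fst (snd d) \<in> wit d \<and> snd (snd d) \<notin> wit d"
    by (rule bchoice[THEN exE])
  show ?thesis
  proof (rule that[of "wit ` Ds"])
    show "finite (wit ` Ds)"
      using \<open>finite Ds\<close> by simp
    have "\<not> Sig \<inter> wit d \<subseteq> a \<inter> b" if "d \<in> Ds" for d
      using that wit by (auto simp: Ds_def defect_def dest: Sig_Imp)
    then show "\<forall>z\<in>wit ` Ds. admissible z \<and> a \<union> b \<subseteq> z \<and> \<not> Sig \<inter> z \<subseteq> a \<inter> b"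
      using wit by blast
    show "\<forall>x\<in>{a, b}. \<forall>B C. defect Sig x B C \<longrightarrow> (\<exists>z\<in>wit ` Ds. B \<in> z \<and> C \<notin> z)"
    proof (intro ballI allI impI)
      fix x B C assume "x \<in> {a, b}" "defect Sig x B C"
      then have "(x, B, C) \<in> Ds"
        by (simp add: Ds_def)
      then show "\<exists>z\<in>wit ` Ds. B \<in> z \<and> C \<notin> z"
        using wit by force
    qed
  qed
qed

lemma next_layer:
  assumes "layer a b" and "x \<in> {a, b}" and "defect Sig x B C"
  obtains y1 y2 where "layer y1 y2" "a \<union> b \<subseteq> y1 \<inter> y2"
    "card (Sig - y1) + card (Sig - y2) < card (Sig - a) + card (Sig - b)"
    "\<forall>x\<in>{a, b}. \<forall>B C. defect Sig x B C \<longrightarrow> Imp B C \<notin> y1 \<inter> y2"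
proof -
  obtain W where "finite W" and W: "\<forall>z\<in>W. admissible z \<and> a \<union> b \<subseteq> z \<and> \<not> Sig \<inter> z \<subseteq> a \<inter> b"
    and witnessed: "\<forall>x\<in>{a, b}. \<forall>B C. defect Sig x B C \<longrightarrow> (\<exists>z\<in>W. B \<in> z \<and> C \<notin> z)"
    by (rule defect_witnesses[OF assms(1)])
  have "W \<noteq> {}"
    using witnessed assms(2,3) by blast
  moreover have "z1 \<subseteq> z2 \<or> z2 \<subseteq> z1 \<or> z1 \<subseteq> z3 \<or> z3 \<subseteq> z1 \<or> z2 \<subseteq> z3 \<or> z3 \<subseteq> z2"
    if "z1 \<in> W" "z2 \<in> W" "z3 \<in> W" for z1 z2 z3
    using that W bw2_prime_theories[OF bw2 root] by (simp add: admissible_def)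
  ultimately obtain y1 y2 where y: "y1 \<in> W" "y2 \<in> W" and "y1 = y2 \<or> \<not> y1 \<subseteq> y2 \<and> \<not> y2 \<subseteq> y1"
    and minimal: "\<forall>z\<in>W. y1 \<subseteq> z \<or> y2 \<subseteq> z"
    using finite_minimal_pair[OF \<open>finite W\<close>] by blast
  then have "layer y1 y2"
    using W by (simp add: layer_def)
  moreover have "a \<union> b \<subseteq> y1 \<inter> y2"
    using W y by blast
  moreover have "card (Sig - y1) + card (Sig - y2) < card (Sig - a) + card (Sig - b)"
    using card_diff_add_less[OF finite_Sig \<open>a \<union> b \<subseteq> y1 \<inter> y2\<close>] W y(1) by blast
  moreover have "\<forall>x\<in>{a, b}. \<forall>B C. defect Sig x B C \<longrightarrow> Imp B C \<notin> y1 \<inter> y2"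
  proof (intro ballI allI impI notI)
    fix x B C assume xBC: "x \<in> {a, b}" "defect Sig x B C"
    assume "Imp B C \<in> y1 \<inter> y2"
    obtain z where "z \<in> W" "B \<in> z" "C \<notin> z"
      using witnessed xBC by blast
    then have "Imp B C \<in> z"
      using minimal \<open>Imp B C \<in> y1 \<inter> y2\<close> by blast
    then show False
      using \<open>z \<in> W\<close> \<open>B \<in> z\<close> \<open>C \<notin> z\<close> W prime_theory_mp by (auto simp: admissible_def)
  qed
  ultimately show ?thesis
    by (rule that)
qed

lemma canonical_map_S_upper_from_layer:
  assumes "layer a b"
  shows "\<exists>m g. canonical_map Sig (S_upper m) S_le g \<and> g (Lay m True) = a \<and> g (Lay m False) = b"
  using assms
proof (induction "card (Sig - a) + card (Sig - b)" arbitrary: a b rule: less_induct)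
  case less
  then have ab: "prime_theory a" "prime_theory b" "w0 \<subseteq> a" "w0 \<subseteq> b"
    by (auto simp: layer_def admissible_def)
  show ?case
  proof (cases "\<exists>x\<in>{a, b}. \<exists>B C. defect Sig x B C")
    case True
    then obtain y1 y2 where "layer y1 y2" "a \<union> b \<subseteq> y1 \<inter> y2"
      and smaller: "card (Sig - y1) + card (Sig - y2) < card (Sig - a) + card (Sig - b)"
      and defects: "\<forall>x\<in>{a, b}. \<forall>B C. defect Sig x B C \<longrightarrow> Imp B C \<notin> y1 \<inter> y2"
      using next_layer[OF less.prems] by blast
    then obtain m g where g: "canonical_map Sig (S_upper m) S_le g"
      and "g (Lay m True) = y1" "g (Lay m False) = y2"
      using less.hyps[OF smaller \<open>layer y1 y2\<close>] by blast
    then have "canonical_map Sig (S_upper (Suc m)) S_le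
        (g(Lay (Suc m) True := a, Lay (Suc m) False := b))"
      using canonical_map_S_upper_Suc[OF g ab(1,2)] \<open>a \<union> b \<subseteq> y1 \<inter> y2\<close> defects by simp
    then show ?thesis
      by (intro exI conjI, assumption) simp_all
  next
    case False
    obtain t where "prime_theory t" "maximal_without t Bot" "a \<union> b \<subseteq> t"
      using wem_common_top[OF wem root ab] by blast
    then have "canonical_map Sig (S_upper 0) S_le ((\<lambda>_. t)(Lay 0 True := a, Lay 0 False := b))"
      using canonical_map_S_upper_0[OF ab(1,2)] False by blast
    then show ?thesis
      by (intro exI conjI, assumption) simp_all
  qed
qed

lemma S_carrier_canonical_map:
  assumes "maximal_without w0 D"
  obtains m f where "canonical_map Sig (S_carrier (Suc (Suc m))) S_le f" "f Rho = w0"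
proof -
  have "layer w0 w0"
    using assms root by (auto simp: layer_def admissible_def)
  then obtain m g where "canonical_map Sig (S_upper m) S_le g"
    and "g (Lay m True) = w0" "g (Lay m False) = w0"
    using canonical_map_S_upper_from_layer by blast
  then show ?thesis
    using that canonical_map_S_carrier by fastforce
qed

end

interpretation Box: ipc_extension "{wPL_ax, bw2_ax, wem_ax}" .

lemma Box_logic_countermodel:
  assumes "A \<notin> Box_logic"
  obtains n where "n \<ge> 2" and "\<not> valid_on (S_carrier n) S_le A"
proof -
  have "\<not> Box.derivable {} A"
    using assms Box.derivable_empty_in_ext by (auto simp: Box_logic_def ext_logic_def)
  then have "\<exists>T. Box.prime_theory T \<and> {} \<subseteq> T \<and> Box.maximal_without T A"
    by (rule Box.lindenbaum)
  then obtain w0 where w0: "Box.prime_theory w0" "Box.maximal_without w0 A"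
    by blast
  interpret layer_construction "{wPL_ax, bw2_ax, wem_ax}" "subformulas A" w0
    by unfold_locales (simp, simp, simp, rule finite_subformulas, erule subformulas_Imp, rule w0(1))
  obtain m f where f: "Box.canonical_map (subformulas A) (S_carrier (Suc (Suc m))) S_le f"
    and "f Rho = w0"
    by (rule S_carrier_canonical_map[OF w0(2)])
  have "Rho \<in> S_carrier (Suc (Suc m))"
    by (simp add: S_carrier_def)
  moreover have "A \<notin> f Rho"
    using \<open>f Rho = w0\<close> w0(2) by (simp add: Box.maximal_without_def)
  ultimately have "\<not> valid_on (S_carrier (Suc (Suc m))) S_le A"
    by (rule Box.canonical_map_refutes[OF f order.refl])
  then show ?thesis
    using that[of "Suc (Suc m)"] by simp
qed

theorem mainTheorem14:
  shows "Box_logic = Log_S"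
proof
  show "Box_logic \<subseteq> Log_S"
    using S_carrier_valid_Box_logic by (auto simp: Log_S_def)
  show "Log_S \<subseteq> Box_logic"
  proof
    fix A assume "A \<in> Log_S"
    then show "A \<in> Box_logic"
      using Box_logic_countermodel by (metis Log_S_def mem_Collect_eq)
  qed
qed

end
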